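(* Let $\Gamma$ be a finite connected graph and $f_1$ an eigenfunction of its normalized Laplacian for the eigenvalue $1$. Partition the vertex set of $\Gamma$ into sets $\Sigma_0,\Sigma_1,\Sigma_2$ such that no edge of $\Gamma$ joins a vertex of $\Sigma_1$ to a vertex of $\Sigma_2$. Assign each edge of $\Gamma$ with both endpoints in $\Sigma_0$ to exactly one of two classes $E_1,E_2$. Let $\Gamma_1$ be the graph with vertex set $\Sigma_1\cup\Sigma_0$ whose edges are the edges of $\Gamma$ with at least one endpoint in $\Sigma_1$ and both endpoints in $\Sigma_1\cup\Sigma_0$, together with $E_1$; let $\Gamma_2$ be a disjoint graph with vertex set a copy of $\Sigma_2\cup\Sigma_0$ whose edges are the (copies of) edges of $\Gamma$ with at least one endpoint in $\Sigma_2$ and both endpoints in $\Sigma_2\cup\Sigma_0$, together with (copies of) $E_2$. Form $\Gamma_0$ from the disjoint union of $\Gamma_1$ and $\Gamma_2$ by adding, for each $q\in\Sigma_0$, a new vertex $w_q$ joined by edges to the copy of $q$ in $\Gamma_1$ and to the copy of $q$ in $\Gamma_2$. Then $1$ is an eigenvalue of the normalized Laplacian of $\Gamma_0$, with an eigenfunction that agrees with $f_1$ on $\Gamma_1$.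
   Context: For a finite simple graph without isolated vertices, write $i\sim j$ for adjacency and $n_i$ for the degree of $i$. The normalized Laplacian acts on real functions $v$ on the vertices by $\Delta v(i)=v(i)-\frac{1}{n_i}\sum_{j\sim i}v(j)$; $\lambda$ is an eigenvalue with eigenfunction $u$ if $u\not\equiv 0$ and $\frac{1}{n_i}\sum_{j\sim i}u(j)=(1-\lambda)u(i)$ for all $i$. For $\lambda=1$ this says $\sum_{j\sim i}u(j)=0$ for all $i$. *)

theory Defs
  imports Complex_Main
begin

definition simple_graph :: "'a set \<Rightarrow> ('a \<Rightarrow> 'a \<Rightarrow> bool) \<Rightarrow> bool" where
  "simple_graph V E \<longleftrightarrow> finite V \<and> (\<forall>x y. E x y \<longrightarrow> x \<in> V \<and> y \<in> V)
     \<and> (\<forall>x y. E x y \<longrightarrow> E y x) \<and> (\<forall>x. \<not> E x x)"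

definition no_isolated :: "'a set \<Rightarrow> ('a \<Rightarrow> 'a \<Rightarrow> bool) \<Rightarrow> bool" where
  "no_isolated V E \<longleftrightarrow> (\<forall>i\<in>V. \<exists>j. E i j)"

definition connected_graph :: "'a set \<Rightarrow> ('a \<Rightarrow> 'a \<Rightarrow> bool) \<Rightarrow> bool" where
  "connected_graph V E \<longleftrightarrow> (\<forall>x\<in>V. \<forall>y\<in>V. E\<^sup>*\<^sup>* x y)"

definition nbrs :: "'a set \<Rightarrow> ('a \<Rightarrow> 'a \<Rightarrow> bool) \<Rightarrow> 'a \<Rightarrow> 'a set" where
  "nbrs V E i = {j \<in> V. E i j}"

definition degree :: "'a set \<Rightarrow> ('a \<Rightarrow> 'a \<Rightarrow> bool) \<Rightarrow> 'a \<Rightarrow> nat" where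
  "degree V E i = card (nbrs V E i)"

definition is_eigenfunction ::
  "'a set \<Rightarrow> ('a \<Rightarrow> 'a \<Rightarrow> bool) \<Rightarrow> real \<Rightarrow> ('a \<Rightarrow> real) \<Rightarrow> bool" where
  "is_eigenfunction V E lam u \<longleftrightarrow> (\<exists>i\<in>V. u i \<noteq> 0) \<and>
     (\<forall>i\<in>V. (1 / real (degree V E i)) * (\<Sum>j\<in>nbrs V E i. u j) = (1 - lam) * u i)"

text \<open>Vertices of Gamma_0: L x = copy of x in Gamma_1, R x = copy of x in Gamma_2,
  W q = the new vertex w_q.\<close>
datatype 'a vtx = L 'a | R 'a | W 'a

definition split_vertices :: "'a set \<Rightarrow> 'a set \<Rightarrow> 'a set \<Rightarrow> 'a vtx set" where
  "split_vertices S0 S1 S2 = L ` (S1 \<union> S0) \<union> R ` (S2 \<union> S0) \<union> W ` S0"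

fun split_edges ::
  "('a \<Rightarrow> 'a \<Rightarrow> bool) \<Rightarrow> 'a set \<Rightarrow> 'a set \<Rightarrow> 'a set \<Rightarrow>
   ('a \<Rightarrow> 'a \<Rightarrow> bool) \<Rightarrow> ('a \<Rightarrow> 'a \<Rightarrow> bool) \<Rightarrow> 'a vtx \<Rightarrow> 'a vtx \<Rightarrow> bool" where
  "split_edges E S0 S1 S2 E1 E2 (L x) (L y) \<longleftrightarrow>
     x \<in> S1 \<union> S0 \<and> y \<in> S1 \<union> S0 \<and> E x y \<and> (x \<in> S1 \<or> y \<in> S1 \<or> E1 x y)"
| "split_edges E S0 S1 S2 E1 E2 (R x) (R y) \<longleftrightarrow>
     x \<in> S2 \<union> S0 \<and> y \<in> S2 \<union> S0 \<and> E x y \<and> (x \<in> S2 \<or> y \<in> S2 \<or> E2 x y)"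
| "split_edges E S0 S1 S2 E1 E2 (L x) (W q) \<longleftrightarrow> q \<in> S0 \<and> x = q"
| "split_edges E S0 S1 S2 E1 E2 (W q) (L x) \<longleftrightarrow> q \<in> S0 \<and> x = q"
| "split_edges E S0 S1 S2 E1 E2 (R x) (W q) \<longleftrightarrow> q \<in> S0 \<and> x = q"
| "split_edges E S0 S1 S2 E1 E2 (W q) (R x) \<longleftrightarrow> q \<in> S0 \<and> x = q"
| "split_edges E S0 S1 S2 E1 E2 _ _ \<longleftrightarrow> False"

end

theory Submission
  imports Defs
begin

text \<open>For eigenvalue 1 the eigenvalue equation just says that every neighbourhood sum of f1
  vanishes. Put f1 on the copy of \<open>\<Gamma>\<^sub>1\<close> and -f1 on the copy of \<open>\<Gamma>\<^sub>2\<close>. A vertex of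
  \<open>\<Sigma>\<^sub>1\<close> or \<open>\<Sigma>\<^sub>2\<close> keeps its whole neighbourhood, so its sum still vanishes. The neighbourhood
  of q in \<open>\<Sigma>\<^sub>0\<close> is split between the two copies, into parts with sums s and -s; giving
  \<open>w\<^sub>q\<close> the value -s repairs both copies of q, and \<open>w\<^sub>q\<close> itself sees f1 q - f1 q = 0.\<close>

lemma simple_graphD:
  assumes "simple_graph V E"
  shows "finite V" and "E x y \<Longrightarrow> x \<in> V" and "E x y \<Longrightarrow> y \<in> V" and "E x y \<Longrightarrow> E y x"
  using assms unfolding simple_graph_def by blast+

lemma degree_pos:
  assumes "simple_graph V E" and "no_isolated V E" and "i \<in> V"
  shows "degree V E i > 0"
proof -
  obtain j where "E i j" using assms(2,3) unfolding no_isolated_def by blast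
  then have "j \<in> nbrs V E i" using simple_graphD(3)[OF assms(1)] by (simp add: nbrs_def)
  moreover have "finite (nbrs V E i)" using simple_graphD(1)[OF assms(1)] by (simp add: nbrs_def)
  ultimately show ?thesis unfolding degree_def by (auto simp: card_gt_0_iff)
qed

lemma is_eigenfunction_1_iff:
  assumes "simple_graph V E" and "no_isolated V E"
  shows "is_eigenfunction V E 1 u \<longleftrightarrow>
    (\<exists>i\<in>V. u i \<noteq> 0) \<and> (\<forall>i\<in>V. (\<Sum>j\<in>nbrs V E i. u j) = 0)"
proof -
  have "1 / real (degree V E i) * (\<Sum>j\<in>nbrs V E i. u j) = (1 - 1) * u i
      \<longleftrightarrow> (\<Sum>j\<in>nbrs V E i. u j) = 0" if "i \<in> V" for i
    using degree_pos[OF assms that] by simp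
  then show ?thesis unfolding is_eigenfunction_def by blast
qed

lemma is_eigenfunction_1I:
  assumes "\<exists>i\<in>V. u i \<noteq> 0" and "\<And>i. i \<in> V \<Longrightarrow> (\<Sum>j\<in>nbrs V E i. u j) = 0"
  shows "is_eigenfunction V E 1 u"
  using assms by (simp add: is_eigenfunction_def)

definition side_nbrs :: "('a \<Rightarrow> 'a \<Rightarrow> bool) \<Rightarrow> 'a set \<Rightarrow> 'a set \<Rightarrow> ('a \<Rightarrow> 'a \<Rightarrow> bool) \<Rightarrow> 'a \<Rightarrow> 'a set" where
  "side_nbrs E S0 S E' x = {y \<in> S \<union> S0. E x y \<and> (x \<in> S \<or> y \<in> S \<or> E' x y)}"

lemma nbrs_split_L:
  assumes "x \<in> S1 \<union> S0"
  shows "nbrs (split_vertices S0 S1 S2) (split_edges E S0 S1 S2 E1 E2) (L x) =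
    L ` side_nbrs E S0 S1 E1 x \<union> (if x \<in> S0 then {W x} else {})" (is "?N = ?M")
proof (rule set_eqI)
  show "v \<in> ?N \<longleftrightarrow> v \<in> ?M" for v
    using assms by (cases v) (auto simp: nbrs_def split_vertices_def side_nbrs_def)
qed

lemma nbrs_split_R:
  assumes "x \<in> S2 \<union> S0"
  shows "nbrs (split_vertices S0 S1 S2) (split_edges E S0 S1 S2 E1 E2) (R x) =
    R ` side_nbrs E S0 S2 E2 x \<union> (if x \<in> S0 then {W x} else {})" (is "?N = ?M")
proof (rule set_eqI)
  show "v \<in> ?N \<longleftrightarrow> v \<in> ?M" for v
    using assms by (cases v) (auto simp: nbrs_def split_vertices_def side_nbrs_def)
qed

lemma nbrs_split_W:
  assumes "q \<in> S0"
  shows "nbrs (split_vertices S0 S1 S2) (split_edges E S0 S1 S2 E1 E2) (W q) = {L q, R q}" (is "?N = ?M")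
proof (rule set_eqI)
  show "v \<in> ?N \<longleftrightarrow> v \<in> ?M" for v
    using assms by (cases v) (auto simp: nbrs_def split_vertices_def)
qed

lemma nbrs_eq_side_nbrs:
  assumes "simple_graph V E" and "V = S0 \<union> S \<union> T" and "S0 \<inter> S = {}" and "S \<inter> T = {}"
    and "\<And>y. y \<in> T \<Longrightarrow> \<not> E x y" and "x \<in> S"
  shows "nbrs V E x = side_nbrs E S0 S E' x"
  using assms unfolding nbrs_def side_nbrs_def simple_graph_def by blast

lemma nbrs_eq_Un_side_nbrs:
  assumes "simple_graph V E" and "V = S0 \<union> S1 \<union> S2" and "x \<in> S0"
    and "S0 \<inter> S1 = {}" and "S0 \<inter> S2 = {}" and "S1 \<inter> S2 = {}"
    and "\<And>x y. x \<in> S0 \<Longrightarrow> y \<in> S0 \<Longrightarrow> E x y \<Longrightarrow> E1 x y \<longleftrightarrow> \<not> E2 x y"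
  shows "nbrs V E x = side_nbrs E S0 S1 E1 x \<union> side_nbrs E S0 S2 E2 x"
    and "side_nbrs E S0 S1 E1 x \<inter> side_nbrs E S0 S2 E2 x = {}"
  using assms unfolding nbrs_def side_nbrs_def simple_graph_def by blast+

definition split_eigenfunction ::
  "('a \<Rightarrow> 'a \<Rightarrow> bool) \<Rightarrow> 'a set \<Rightarrow> 'a set \<Rightarrow> ('a \<Rightarrow> 'a \<Rightarrow> bool) \<Rightarrow> ('a \<Rightarrow> real) \<Rightarrow> 'a vtx \<Rightarrow> real" where
  "split_eigenfunction E S0 S1 E1 f v = (case v of
     L x \<Rightarrow> f x | R x \<Rightarrow> - f x | W q \<Rightarrow> - (\<Sum>y\<in>side_nbrs E S0 S1 E1 q. f y))"

lemma sum_split_eigenfunction_L: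
  "(\<Sum>v\<in>L ` A. split_eigenfunction E S0 S1 E1 f v) = (\<Sum>y\<in>A. f y)"
  by (simp add: sum.reindex inj_on_def split_eigenfunction_def)

lemma sum_split_eigenfunction_R:
  "(\<Sum>v\<in>R ` A. split_eigenfunction E S0 S1 E1 f v) = - (\<Sum>y\<in>A. f y)"
  by (simp add: sum.reindex inj_on_def split_eigenfunction_def sum_negf)

context
  fixes V :: "'a set" and E E1 E2 :: "'a \<Rightarrow> 'a \<Rightarrow> bool" and S0 S1 S2 :: "'a set"
  assumes graph: "simple_graph V E"
    and cover: "S0 \<union> S1 \<union> S2 = V"
    and disj01: "S0 \<inter> S1 = {}" and disj02: "S0 \<inter> S2 = {}" and disj12: "S1 \<inter> S2 = {}"
    and no12: "\<And>x y. x \<in> S1 \<Longrightarrow> y \<in> S2 \<Longrightarrow> \<not> E x y"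
    and E12_part: "\<And>x y. x \<in> S0 \<Longrightarrow> y \<in> S0 \<Longrightarrow> E x y \<Longrightarrow> (E1 x y \<longleftrightarrow> \<not> E2 x y)"
begin

lemma finite_side_nbrs: "finite (side_nbrs E S0 S E' x)" if "S \<subseteq> V"
proof -
  have "finite V" by (rule simple_graphD(1)[OF graph])
  then show ?thesis
    by (rule finite_subset[rotated]) (use that cover in \<open>auto simp: side_nbrs_def\<close>)
qed

lemma sum_nbrs_eq_side_sums:
  assumes "x \<in> S0"
  shows "(\<Sum>y\<in>nbrs V E x. f y) =
    (\<Sum>y\<in>side_nbrs E S0 S1 E1 x. f y) + (\<Sum>y\<in>side_nbrs E S0 S2 E2 x. f y)"
proof -
  note split = nbrs_eq_Un_side_nbrs[OF graph cover[symmetric] assms disj01 disj02 disj12 E12_part]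
  have "finite (side_nbrs E S0 S1 E1 x)" "finite (side_nbrs E S0 S2 E2 x)"
    using cover by (auto intro: finite_side_nbrs)
  with split show ?thesis by (simp add: sum.union_disjoint)
qed

lemma split_eigenfunction_harmonic_L:
  assumes harmonic: "\<And>i. i \<in> V \<Longrightarrow> (\<Sum>j\<in>nbrs V E i. f j) = 0"
    and x: "x \<in> S1 \<union> S0"
  shows "(\<Sum>u\<in>nbrs (split_vertices S0 S1 S2) (split_edges E S0 S1 S2 E1 E2) (L x).
           split_eigenfunction E S0 S1 E1 f u) = 0"
proof (cases "x \<in> S0")
  case True
  moreover have "W x \<notin> L ` side_nbrs E S0 S1 E1 x" by blast
  moreover have "finite (side_nbrs E S0 S1 E1 x)" using cover by (auto intro: finite_side_nbrs)
  ultimately show ?thesis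
    by (simp add: nbrs_split_L[OF x] sum_split_eigenfunction_L) (simp add: split_eigenfunction_def)
next
  case False
  with x have "x \<in> S1" by blast
  then have "x \<in> V" using cover by blast
  have "nbrs V E x = side_nbrs E S0 S1 E1 x"
    by (rule nbrs_eq_side_nbrs[OF graph cover[symmetric] disj01 disj12 no12[OF \<open>x \<in> S1\<close>] \<open>x \<in> S1\<close>])
  with harmonic[OF \<open>x \<in> V\<close>] False show ?thesis
    by (simp add: nbrs_split_L[OF x] sum_split_eigenfunction_L)
qed

lemma split_eigenfunction_harmonic_R:
  assumes harmonic: "\<And>i. i \<in> V \<Longrightarrow> (\<Sum>j\<in>nbrs V E i. f j) = 0"
    and x: "x \<in> S2 \<union> S0"
  shows "(\<Sum>u\<in>nbrs (split_vertices S0 S1 S2) (split_edges E S0 S1 S2 E1 E2) (R x).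
           split_eigenfunction E S0 S1 E1 f u) = 0"
proof -
  have "x \<in> V" using x cover by blast
  show ?thesis
  proof (cases "x \<in> S0")
    case True
    then have "(\<Sum>y\<in>side_nbrs E S0 S1 E1 x. f y) + (\<Sum>y\<in>side_nbrs E S0 S2 E2 x. f y) = 0"
      using harmonic[OF \<open>x \<in> V\<close>] sum_nbrs_eq_side_sums[OF True, of f] by simp
    moreover have "W x \<notin> R ` side_nbrs E S0 S2 E2 x" by blast
    moreover have "finite (side_nbrs E S0 S2 E2 x)" using cover by (auto intro: finite_side_nbrs)
    ultimately show ?thesis
      using True by (simp add: nbrs_split_R[OF x] sum_split_eigenfunction_R)
        (simp add: split_eigenfunction_def)
  next
    case False
    with x have "x \<in> S2" by blast
    have "V = S0 \<union> S2 \<union> S1" "S2 \<inter> S1 = {}" using cover disj12 by auto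
    moreover have "\<And>y. y \<in> S1 \<Longrightarrow> \<not> E x y"
      using no12 simple_graphD(4)[OF graph] \<open>x \<in> S2\<close> by blast
    ultimately have "nbrs V E x = side_nbrs E S0 S2 E2 x"
      by (intro nbrs_eq_side_nbrs[OF graph _ disj02 _ _ \<open>x \<in> S2\<close>])
    with harmonic[OF \<open>x \<in> V\<close>] False show ?thesis
      by (simp add: nbrs_split_R[OF x] sum_split_eigenfunction_R)
  qed
qed

lemma split_eigenfunction_harmonic:
  assumes "\<And>i. i \<in> V \<Longrightarrow> (\<Sum>j\<in>nbrs V E i. f j) = 0"
    and v: "v \<in> split_vertices S0 S1 S2"
  shows "(\<Sum>u\<in>nbrs (split_vertices S0 S1 S2) (split_edges E S0 S1 S2 E1 E2) v.
           split_eigenfunction E S0 S1 E1 f u) = 0"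
proof (cases v)
  case (L x)
  with v have "x \<in> S1 \<union> S0" by (auto simp: split_vertices_def)
  with L show ?thesis using split_eigenfunction_harmonic_L[OF assms(1)] by blast
next
  case (R x)
  with v have "x \<in> S2 \<union> S0" by (auto simp: split_vertices_def)
  with R show ?thesis using split_eigenfunction_harmonic_R[OF assms(1)] by blast
next
  case (W q)
  with v have "q \<in> S0" by (auto simp: split_vertices_def)
  with W show ?thesis by (simp add: nbrs_split_W split_eigenfunction_def)
qed

end

theorem theorem5:
  fixes V :: "'a set" and E :: "'a \<Rightarrow> 'a \<Rightarrow> bool"
    and S0 S1 S2 :: "'a set" and E1 E2 :: "'a \<Rightarrow> 'a \<Rightarrow> bool"
    and f1 :: "'a \<Rightarrow> real"
  assumes graph: "simple_graph V E"
    and noiso: "no_isolated V E"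
    and conn: "connected_graph V E"
    and eig: "is_eigenfunction V E 1 f1"
    and cover: "S0 \<union> S1 \<union> S2 = V"
    and disj01: "S0 \<inter> S1 = {}" and disj02: "S0 \<inter> S2 = {}" and disj12: "S1 \<inter> S2 = {}"
    and no12: "\<And>x y. x \<in> S1 \<Longrightarrow> y \<in> S2 \<Longrightarrow> \<not> E x y"
    and E1_sub: "\<And>x y. E1 x y \<Longrightarrow> E x y \<and> x \<in> S0 \<and> y \<in> S0"
    and E2_sub: "\<And>x y. E2 x y \<Longrightarrow> E x y \<and> x \<in> S0 \<and> y \<in> S0"
    and E1_sym: "\<And>x y. E1 x y \<Longrightarrow> E1 y x"
    and E2_sym: "\<And>x y. E2 x y \<Longrightarrow> E2 y x"
    and E12_part: "\<And>x y. x \<in> S0 \<Longrightarrow> y \<in> S0 \<Longrightarrow> E x y \<Longrightarrow> (E1 x y \<longleftrightarrow> \<not> E2 x y)"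
  shows "\<exists>g. is_eigenfunction (split_vertices S0 S1 S2) (split_edges E S0 S1 S2 E1 E2) 1 g
            \<and> (\<forall>x \<in> S1 \<union> S0. g (L x) = f1 x)"
proof -
  let ?g = "split_eigenfunction E S0 S1 E1 f1"
  obtain i where i: "i \<in> V" "f1 i \<noteq> 0"
    and harmonic: "\<And>i. i \<in> V \<Longrightarrow> (\<Sum>j\<in>nbrs V E i. f1 j) = 0"
    using eig is_eigenfunction_1_iff[OF graph noiso] by blast
  have "\<exists>v\<in>split_vertices S0 S1 S2. ?g v \<noteq> 0"
  proof (cases "i \<in> S1 \<union> S0")
    case True
    with i show ?thesis
      by (intro bexI[of _ "L i"]) (auto simp: split_eigenfunction_def split_vertices_def)
  next
    case False
    with i cover show ?thesis
      by (intro bexI[of _ "R i"]) (auto simp: split_eigenfunction_def split_vertices_def)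
  qed
  then have "is_eigenfunction (split_vertices S0 S1 S2) (split_edges E S0 S1 S2 E1 E2) 1 ?g"
    using split_eigenfunction_harmonic[OF graph cover disj01 disj02 disj12 no12 E12_part harmonic]
    by (rule is_eigenfunction_1I)
  moreover have "\<forall>x \<in> S1 \<union> S0. ?g (L x) = f1 x" by (simp add: split_eigenfunction_def)
  ultimately show ?thesis by blast
qed

end
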